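(* For $\kappa\in(8/3,8)$, the function $\gamma_\kappa$ is strictly convex on $[0,\infty)$.
   Context: $\Lambda_\kappa(\lambda)=\log\big(-\cos(4\pi/\kappa)/\cos(\pi\sqrt{(1-4/\kappa)^2+8\lambda/\kappa})\big)$ for $\lambda<1-\frac2\kappa-\frac{3\kappa}{32}$ (with $\cos(\pi\sqrt{\cdot})=\cosh(\pi\sqrt{-\cdot})$ for negative argument) and $+\infty$ otherwise; $\Lambda_\kappa^\star(x)=\sup_\lambda(\lambda x-\Lambda_\kappa(\lambda))$; $\gamma_\kappa(\nu)=\nu\Lambda_\kappa^\star(1/\nu)$ for $\nu>0$ and $\gamma_\kappa(0)=1-\frac2\kappa-\frac{3\kappa}{32}$. *)

theory Defs
  imports "HOL-Analysis.Analysis"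
begin

definition lam0 :: "real \<Rightarrow> real" where
  "lam0 \<kappa> = 1 - 2 / \<kappa> - 3 * \<kappa> / 32"

text \<open>cos(pi sqrt a), read as cosh(pi sqrt(-a)) for negative a.\<close>
definition cos_sqrt :: "real \<Rightarrow> real" where
  "cos_sqrt a = (if a \<ge> 0 then cos (pi * sqrt a) else cosh (pi * sqrt (- a)))"

definition Lambda :: "real \<Rightarrow> real \<Rightarrow> ereal" where
  "Lambda \<kappa> l =
     (if l < lam0 \<kappa>
      then ereal (ln (- cos (4 * pi / \<kappa>) /
                      cos_sqrt ((1 - 4 / \<kappa>)\<^sup>2 + 8 * l / \<kappa>)))
      else \<infinity>)"

definition Lambda_star :: "real \<Rightarrow> real \<Rightarrow> ereal" where
  "Lambda_star \<kappa> x = (SUP l::real. ereal (l * x) - Lambda \<kappa> l)"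

text \<open>gamma_kappa, defined for nu \<ge> 0 (value for nu < 0 is irrelevant).\<close>
definition gamma :: "real \<Rightarrow> real \<Rightarrow> ereal" where
  "gamma \<kappa> \<nu> = (if \<nu> = 0 then ereal (lam0 \<kappa>)
                 else ereal \<nu> * Lambda_star \<kappa> (1 / \<nu>))"

definition strict_convex_on_ereal :: "real set \<Rightarrow> (real \<Rightarrow> ereal) \<Rightarrow> bool" where
  "strict_convex_on_ereal S f \<longleftrightarrow>
     (\<forall>x\<in>S. \<forall>y\<in>S. \<forall>t. x \<noteq> y \<and> 0 < t \<and> t < 1 \<longrightarrow>
        f (t * x + (1 - t) * y) < ereal t * f x + ereal (1 - t) * f y)"

end

theory Submission
  imports Defs "HOL-Real_Asymp.Real_Asymp"
begin

text \<open>For \<open>\<nu> > 0\<close>, \<open>\<nu> \<Lambda>\<^sup>\<star>(1/\<nu>)\<close> is the supremum of \<open>\<lambda> - \<nu> \<Lambda>(\<lambda>)\<close> over \<open>\<lambda> < \<lambda>\<^sub>0\<close>, and for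
  \<open>\<nu> = 0\<close> the same supremum is \<open>\<lambda>\<^sub>0 = \<gamma>(0)\<close>; so \<open>\<gamma>\<close> is a supremum of functions affine in \<open>\<nu>\<close>,
  hence convex. For \<open>\<nu> > 0\<close> the supremum is attained, since \<open>\<lambda> - \<nu> \<Lambda>(\<lambda>)\<close> tends to
  \<open>-\<infinity>\<close> both as \<open>\<lambda> \<rightarrow> -\<infinity>\<close> (where \<open>\<Lambda>\<close> decreases only like \<open>-\<surd>|\<lambda>|\<close>) and as
  \<open>\<lambda> \<rightarrow> \<lambda>\<^sub>0\<close> (where the cosine in the denominator of \<open>\<Lambda>\<close> vanishes). If equality held in
  the convexity inequality for \<open>x \<noteq> y\<close>, a maximiser \<open>m\<close> for the intermediate point would
  also be a maximiser for \<open>x\<close> and for \<open>y\<close>, and the critical-point equations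
  \<open>1 = x \<Lambda>'(m) = y \<Lambda>'(m)\<close> would force \<open>x = y\<close>.\<close>

lemma cosh_sums_even_powers: "(\<lambda>n. x ^ (2 * n) / fact (2 * n)) sums cosh (x::real)"
proof -
  have "(\<lambda>n. \<Sum>k = n * 2..<n * 2 + 2. (if even k then x ^ k /\<^sub>R fact k else 0)) sums cosh x"
    by (rule sums_group) (use cosh_converges [of x] in auto)
  then show ?thesis
    by (simp add: ac_simps divide_inverse)
qed

lemma cos_sqrt_sums: "(\<lambda>n. (- 1) ^ n * pi ^ (2 * n) / fact (2 * n) * u ^ n) sums cos_sqrt u"
proof (cases "u \<ge> 0")
  case True
  have "(pi * sqrt u) ^ (2 * n) = pi ^ (2 * n) * u ^ n" for n
    using True by (simp add: power_mult power_mult_distrib)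
  then show ?thesis
    using cos_paired [of "pi * sqrt u"] True by (simp add: cos_sqrt_def field_simps)
next
  case False
  have "(pi * sqrt (- u)) ^ (2 * n) = (- 1) ^ n * pi ^ (2 * n) * u ^ n" for n
  proof -
    have "(pi * sqrt (- u)) ^ (2 * n) = (pi\<^sup>2 * (- u)) ^ n"
      using False by (simp add: power_mult power_mult_distrib)
    also have "\<dots> = (pi\<^sup>2) ^ n * ((- 1) ^ n * u ^ n)"
      by (simp only: power_mult_distrib power_minus [of u])
    finally show ?thesis
      by (simp add: power_mult)
  qed
  then show ?thesis
    using cosh_sums_even_powers [of "pi * sqrt (- u)"] False by (simp add: cos_sqrt_def field_simps)
qed

text \<open>Both branches of \<open>cos_sqrt\<close> are one entire power series in \<open>u\<close>, so the
  case split at \<open>u = 0\<close> costs no smoothness.\<close>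
lemma cos_sqrt_differentiable: "cos_sqrt differentiable (at u)"
proof -
  define c :: "nat \<Rightarrow> real" where "c n = (- 1) ^ n * pi ^ (2 * n) / fact (2 * n)" for n
  have sums: "(\<lambda>n. c n * u ^ n) sums cos_sqrt u" for u
    unfolding c_def by (rule cos_sqrt_sums)
  then have "cos_sqrt = (\<lambda>u. \<Sum>n. c n * u ^ n)"
    by (auto simp: sums_unique)
  moreover have "summable (\<lambda>n. c n * u ^ n)" for u
    using sums sums_summable by blast
  ultimately show ?thesis
    using termdiffs_strong_converges_everywhere [of c u] real_differentiable_def by metis
qed

lemma isCont_cos_sqrt: "isCont cos_sqrt u"
  by (rule differentiable_imp_continuous_within [OF cos_sqrt_differentiable])

lemma cos_sqrt_pos: "u < 1 / 4 \<Longrightarrow> 0 < cos_sqrt u"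
proof (cases "u \<ge> 0")
  case True
  assume "u < 1 / 4"
  then have "sqrt u < 1 / 2"
    by (intro real_less_lsqrt) (auto simp: power2_eq_square)
  then have "pi * sqrt u < pi / 2"
    by simp
  moreover have "0 \<le> pi * sqrt u"
    using True by simp
  ultimately have "0 < cos (pi * sqrt u)"
    using pi_gt_zero by (intro cos_gt_zero_pi) linarith+
  with True show ?thesis
    by (simp add: cos_sqrt_def)
qed (simp add: cos_sqrt_def)

lemma cos_sqrt_quarter: "cos_sqrt (1 / 4) = 0"
proof -
  have "cos_sqrt (1 / 4) = cos (pi / 2)"
    by (simp add: cos_sqrt_def real_sqrt_divide)
  then show ?thesis
    by simp
qed

lemma cos_sqrt_le_exp: "cos_sqrt u \<le> exp (pi * sqrt \<bar>u\<bar>)"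
proof (cases "u \<ge> 0")
  case True
  have "cos (pi * sqrt u) \<le> 1" "1 \<le> exp (pi * sqrt u)"
    using True by simp_all
  then have "cos (pi * sqrt u) \<le> exp (pi * sqrt u)"
    by linarith
  with True show ?thesis
    by (simp add: cos_sqrt_def)
next
  case False
  have "cosh x \<le> exp x" if "0 \<le> x" for x :: real
    using that by (simp add: cosh_field_def)
  with False show ?thesis
    by (simp add: cos_sqrt_def)
qed

lemma cos_sqrt_tendsto_quarter: "filterlim cos_sqrt (at_right 0) (at_left (1 / 4))"
proof -
  have "(cos_sqrt \<longlongrightarrow> 0) (at_left (1 / 4))"
    using isCont_cos_sqrt [of "1 / 4"] cos_sqrt_quarter
    by (metis isCont_def filterlim_at_split)
  moreover have "eventually (\<lambda>u. u \<in> {0<..<1 / 4}) (at_left (1 / 4 :: real))"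
    by (rule eventually_at_left_real) simp
  then have "eventually (\<lambda>u. 0 < cos_sqrt u) (at_left (1 / 4))"
    by eventually_elim (simp add: cos_sqrt_pos)
  ultimately show ?thesis
    by (auto simp: filterlim_at elim: eventually_mono)
qed

lemma continuous_on_lessThan_attains_sup:
  fixes f :: "real \<Rightarrow> real"
  assumes cont: "continuous_on {..<b} f"
    and bot: "filterlim f at_bot at_bot" and left: "filterlim f at_bot (at_left b)"
  shows "\<exists>m<b. \<forall>l<b. f l \<le> f m"
proof -
  define a where "a = b - 1"
  have "a < b"
    by (simp add: a_def)
  have "eventually (\<lambda>l. f l < f a) at_bot"
    using bot by (simp add: filterlim_at_bot_dense)
  then obtain N where N: "\<And>l. l \<le> N \<Longrightarrow> f l < f a"
    by (auto simp: eventually_at_bot_linorder)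
  define L where "L = min N a"
  have L: "L \<le> a" "\<And>l. l < L \<Longrightarrow> f l < f a"
    using N by (auto simp: L_def)
  have "eventually (\<lambda>l. f l < f a) (at_left b)"
    using left by (simp add: filterlim_at_bot_dense)
  then obtain c where c: "c < b" "\<And>l. c < l \<Longrightarrow> l < b \<Longrightarrow> f l < f a"
    by (auto simp: eventually_at_left [OF \<open>a < b\<close>])
  define R where "R = max c a"
  have R: "a \<le> R" "R < b" "\<And>l. R < l \<Longrightarrow> l < b \<Longrightarrow> f l < f a"
    using c \<open>a < b\<close> by (auto simp: R_def)
  have "continuous_on {L..R} f"
    using R(2) by (intro continuous_on_subset [OF cont]) auto
  then obtain m where m: "m \<in> {L..R}" "\<And>l. l \<in> {L..R} \<Longrightarrow> f l \<le> f m"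
    using continuous_attains_sup [of "{L..R}" f] L(1) R(1) by fastforce
  have "f a \<le> f m"
    using m(2) L(1) R(1) by simp
  then have "f l \<le> f m" if "l < b" for l
    using L(2) [of l] R(3) [of l] m(2) [of l] that by force
  moreover have "m < b"
    using m(1) R(2) by simp
  ultimately show ?thesis
    by blast
qed

definition Lambda_real :: "real \<Rightarrow> real \<Rightarrow> real" where
  "Lambda_real \<kappa> l = ln (- cos (4 * pi / \<kappa>) / cos_sqrt ((1 - 4 / \<kappa>)\<^sup>2 + 8 * l / \<kappa>))"

definition gamma_obj :: "real \<Rightarrow> real \<Rightarrow> real \<Rightarrow> real" where
  "gamma_obj \<kappa> \<nu> l = l - \<nu> * Lambda_real \<kappa> l"

lemma Lambda_eq_Lambda_real:
  "Lambda \<kappa> l = (if l < lam0 \<kappa> then ereal (Lambda_real \<kappa> l) else \<infinity>)"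
  by (simp add: Lambda_def Lambda_real_def)

lemma Lambda_argument_lam0: "0 < \<kappa> \<Longrightarrow> (1 - 4 / \<kappa>)\<^sup>2 + 8 * lam0 \<kappa> / \<kappa> = 1 / 4"
  by (simp add: lam0_def field_simps power2_eq_square)

lemma Lambda_argument_less_quarter:
  assumes "0 < \<kappa>" "l < lam0 \<kappa>"
  shows "(1 - 4 / \<kappa>)\<^sup>2 + 8 * l / \<kappa> < 1 / 4"
proof -
  have "8 * l / \<kappa> < 8 * lam0 \<kappa> / \<kappa>"
    using assms by (simp add: divide_strict_right_mono)
  then show ?thesis
    using Lambda_argument_lam0 [OF assms(1)] by linarith
qed

lemma gamma_eq_gamma_obj_max:
  assumes "0 < \<nu>" "m < lam0 \<kappa>" and max: "\<forall>l<lam0 \<kappa>. gamma_obj \<kappa> \<nu> l \<le> gamma_obj \<kappa> \<nu> m"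
  shows "gamma \<kappa> \<nu> = ereal (gamma_obj \<kappa> \<nu> m)"
proof -
  have "Lambda_star \<kappa> (1 / \<nu>) = ereal (gamma_obj \<kappa> \<nu> m / \<nu>)"
    unfolding Lambda_star_def
  proof (rule SUP_eqI)
    fix l :: real
    show "ereal (l * (1 / \<nu>)) - Lambda \<kappa> l \<le> ereal (gamma_obj \<kappa> \<nu> m / \<nu>)"
    proof (cases "l < lam0 \<kappa>")
      case True
      then have "gamma_obj \<kappa> \<nu> l / \<nu> \<le> gamma_obj \<kappa> \<nu> m / \<nu>"
        using max \<open>0 < \<nu>\<close> by (simp add: divide_right_mono)
      with True \<open>0 < \<nu>\<close> show ?thesis
        by (simp add: Lambda_eq_Lambda_real gamma_obj_def diff_divide_distrib)
    qed (simp add: Lambda_eq_Lambda_real)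
  next
    fix y
    assume "\<And>l. l \<in> UNIV \<Longrightarrow> ereal (l * (1 / \<nu>)) - Lambda \<kappa> l \<le> y"
    from this [of m] show "ereal (gamma_obj \<kappa> \<nu> m / \<nu>) \<le> y"
      using assms(1,2) by (simp add: Lambda_eq_Lambda_real gamma_obj_def diff_divide_distrib)
  qed
  then show ?thesis
    using \<open>0 < \<nu>\<close> by (simp add: gamma_def)
qed

context
  fixes \<kappa> :: real
  assumes kappa_range: "8 / 3 < \<kappa>" "\<kappa> < 8"
begin

lemma kappa_pos: "0 < \<kappa>"
  using kappa_range by simp

lemma minus_cos_four_pi_div_kappa_pos: "0 < - cos (4 * pi / \<kappa>)"
proof -
  have "pi / 2 < 4 * pi / \<kappa> - pi + pi" "4 * pi / \<kappa> < 3 * pi / 2"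
    using kappa_range kappa_pos by (simp_all add: field_simps)
  then have "0 < cos (4 * pi / \<kappa> - pi)"
    by (intro cos_gt_zero_pi) auto
  then show ?thesis
    by simp
qed

lemma Lambda_real_differentiable:
  assumes "l < lam0 \<kappa>"
  shows "Lambda_real \<kappa> differentiable (at l)"
proof -
  define u where "u = (1 - 4 / \<kappa>)\<^sup>2 + 8 * l / \<kappa>"
  obtain D where D: "(cos_sqrt has_real_derivative D) (at u)"
    using cos_sqrt_differentiable real_differentiable_def by blast
  have pos: "0 < cos_sqrt u"
    unfolding u_def using Lambda_argument_less_quarter [OF kappa_pos assms] by (rule cos_sqrt_pos)
  have "((\<lambda>l. (1 - 4 / \<kappa>)\<^sup>2 + 8 * l / \<kappa>) has_real_derivative 8 / \<kappa>) (at l)"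
    using kappa_pos by (auto intro!: derivative_eq_intros)
  from DERIV_chain2 [OF D [unfolded u_def] this]
  have inner: "((\<lambda>l. cos_sqrt ((1 - 4 / \<kappa>)\<^sup>2 + 8 * l / \<kappa>)) has_real_derivative D * (8 / \<kappa>)) (at l)" .
  have "((\<lambda>w. ln (- cos (4 * pi / \<kappa>) / w)) has_real_derivative - 1 / cos_sqrt u) (at (cos_sqrt u))"
    using pos minus_cos_four_pi_div_kappa_pos by (auto intro!: derivative_eq_intros simp: field_simps power2_eq_square)
  from DERIV_chain2 [OF this [unfolded u_def] inner]
  have "(Lambda_real \<kappa> has_real_derivative - 1 / cos_sqrt u * (D * (8 / \<kappa>))) (at l)"
    unfolding Lambda_real_def u_def .
  then show ?thesis
    using real_differentiable_def by blast
qed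

lemma continuous_on_Lambda_real: "continuous_on {..<lam0 \<kappa>} (Lambda_real \<kappa>)"
  by (intro continuous_at_imp_continuous_on ballI differentiable_imp_continuous_within
      Lambda_real_differentiable) auto

lemma Lambda_real_lower_bound:
  assumes "l < lam0 \<kappa>"
  shows "ln (- cos (4 * pi / \<kappa>)) - pi * sqrt \<bar>(1 - 4 / \<kappa>)\<^sup>2 + 8 * l / \<kappa>\<bar> \<le> Lambda_real \<kappa> l"
proof -
  define u where "u = (1 - 4 / \<kappa>)\<^sup>2 + 8 * l / \<kappa>"
  have pos: "0 < cos_sqrt u"
    unfolding u_def using Lambda_argument_less_quarter [OF kappa_pos assms] by (rule cos_sqrt_pos)
  have "ln (cos_sqrt u) \<le> ln (exp (pi * sqrt \<bar>u\<bar>))"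
    using pos cos_sqrt_le_exp [of u] by (subst ln_le_cancel_iff) auto
  moreover have "Lambda_real \<kappa> l = ln (- cos (4 * pi / \<kappa>)) - ln (cos_sqrt u)"
    unfolding Lambda_real_def u_def [symmetric] using minus_cos_four_pi_div_kappa_pos pos by (rule ln_divide_pos)
  ultimately show ?thesis
    by (simp flip: u_def)
qed

lemma Lambda_real_at_left_lam0: "filterlim (Lambda_real \<kappa>) at_top (at_left (lam0 \<kappa>))"
proof -
  have "((\<lambda>l. (1 - 4 / \<kappa>)\<^sup>2 + 8 * l / \<kappa>) \<longlongrightarrow> 1 / 4) (at_left (lam0 \<kappa>))"
    using Lambda_argument_lam0 [OF kappa_pos] by (auto intro!: tendsto_eq_intros)
  moreover have "eventually (\<lambda>l. l \<in> {lam0 \<kappa> - 1<..<lam0 \<kappa>}) (at_left (lam0 \<kappa>))"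
    by (rule eventually_at_left_real) simp
  then have "eventually (\<lambda>l. (1 - 4 / \<kappa>)\<^sup>2 + 8 * l / \<kappa> < 1 / 4) (at_left (lam0 \<kappa>))"
    by eventually_elim (rule Lambda_argument_less_quarter [OF kappa_pos], simp)
  ultimately have "filterlim (\<lambda>l. (1 - 4 / \<kappa>)\<^sup>2 + 8 * l / \<kappa>) (at_left (1 / 4)) (at_left (lam0 \<kappa>))"
    by (auto simp: filterlim_at elim: eventually_mono)
  from filterlim_compose [OF cos_sqrt_tendsto_quarter this]
  have cos_sqrt_to_0: "filterlim (\<lambda>l. cos_sqrt ((1 - 4 / \<kappa>)\<^sup>2 + 8 * l / \<kappa>)) (at_right 0) (at_left (lam0 \<kappa>))" .
  have "filterlim (\<lambda>x. - cos (4 * pi / \<kappa>) * inverse x) at_top (at_right 0)"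
    by (rule filterlim_tendsto_pos_mult_at_top [OF tendsto_const minus_cos_four_pi_div_kappa_pos filterlim_inverse_at_top_right])
  then have "filterlim (\<lambda>x. - cos (4 * pi / \<kappa>) / x) at_top (at_right 0)"
    by (simp add: divide_inverse)
  from filterlim_compose [OF ln_at_top filterlim_compose [OF this cos_sqrt_to_0]]
  show ?thesis
    unfolding Lambda_real_def .
qed

lemma gamma_obj_at_bot:
  assumes "0 \<le> \<nu>"
  shows "filterlim (gamma_obj \<kappa> \<nu>) at_bot at_bot"
proof -
  define c where "c = ln (- cos (4 * pi / \<kappa>))"
  have "filterlim (\<lambda>l. l - \<nu> * c + \<nu> * pi * sqrt \<bar>(1 - 4 / \<kappa>)\<^sup>2 + 8 * l / \<kappa>\<bar>) at_bot at_bot"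
    using kappa_pos assms by real_asymp
  moreover have "eventually (\<lambda>l. gamma_obj \<kappa> \<nu> l
      \<le> l - \<nu> * c + \<nu> * pi * sqrt \<bar>(1 - 4 / \<kappa>)\<^sup>2 + 8 * l / \<kappa>\<bar>) at_bot"
    using eventually_gt_at_bot [of "lam0 \<kappa>"]
  proof eventually_elim
    case (elim l)
    from mult_left_mono [OF Lambda_real_lower_bound [OF elim] assms] show ?case
      by (simp add: gamma_obj_def c_def algebra_simps)
  qed
  ultimately show ?thesis
    by (auto simp: filterlim_at_bot elim: eventually_elim2 intro: order_trans)
qed

lemma gamma_obj_at_left_lam0:
  assumes "0 < \<nu>"
  shows "filterlim (gamma_obj \<kappa> \<nu>) at_bot (at_left (lam0 \<kappa>))"
proof -
  have "filterlim (\<lambda>l. \<nu> * Lambda_real \<kappa> l) at_top (at_left (lam0 \<kappa>))"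
    by (rule filterlim_tendsto_pos_mult_at_top [OF tendsto_const assms Lambda_real_at_left_lam0])
  then have "filterlim (\<lambda>l. - (\<nu> * Lambda_real \<kappa> l)) at_bot (at_left (lam0 \<kappa>))"
    by (simp add: filterlim_uminus_at_bot)
  then have "filterlim (\<lambda>l. l + - (\<nu> * Lambda_real \<kappa> l)) at_bot (at_left (lam0 \<kappa>))"
    by (subst filterlim_tendsto_add_at_bot_iff [where c = "lam0 \<kappa>"]) auto
  then show ?thesis
    unfolding gamma_obj_def [abs_def] by simp
qed

lemma gamma_obj_has_max:
  assumes "0 < \<nu>"
  shows "\<exists>m<lam0 \<kappa>. \<forall>l<lam0 \<kappa>. gamma_obj \<kappa> \<nu> l \<le> gamma_obj \<kappa> \<nu> m"
proof (rule continuous_on_lessThan_attains_sup)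
  show "continuous_on {..<lam0 \<kappa>} (gamma_obj \<kappa> \<nu>)"
    unfolding gamma_obj_def using continuous_on_Lambda_real by (intro continuous_intros)
qed (use assms gamma_obj_at_bot gamma_obj_at_left_lam0 in auto)

lemma gamma_obj_common_maximizer:
  assumes "m < lam0 \<kappa>"
    and "\<forall>l<lam0 \<kappa>. gamma_obj \<kappa> x l \<le> gamma_obj \<kappa> x m"
    and "\<forall>l<lam0 \<kappa>. gamma_obj \<kappa> y l \<le> gamma_obj \<kappa> y m"
  shows "x = y"
proof -
  obtain D where D: "(Lambda_real \<kappa> has_real_derivative D) (at m)"
    using Lambda_real_differentiable [OF assms(1)] real_differentiable_def by blast
  have critical: "1 - \<nu> * D = 0" if "\<forall>l<lam0 \<kappa>. gamma_obj \<kappa> \<nu> l \<le> gamma_obj \<kappa> \<nu> m" for \<nu>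
  proof (rule DERIV_local_max)
    show "(gamma_obj \<kappa> \<nu> has_real_derivative 1 - \<nu> * D) (at m)"
      unfolding gamma_obj_def using D by (auto intro!: derivative_eq_intros)
    show "0 < lam0 \<kappa> - m"
      using assms(1) by simp
    show "\<forall>l. \<bar>m - l\<bar> < lam0 \<kappa> - m \<longrightarrow> gamma_obj \<kappa> \<nu> l \<le> gamma_obj \<kappa> \<nu> m"
      using that by auto
  qed
  from critical [OF assms(2)] critical [OF assms(3)] have "x * D = y * D" "D \<noteq> 0"
    by auto
  then show ?thesis
    by simp
qed

lemma gamma_ge_gamma_obj:
  assumes "0 \<le> \<nu>" "m < lam0 \<kappa>"
  obtains G where "gamma \<kappa> \<nu> = ereal G" "gamma_obj \<kappa> \<nu> m \<le> G"
    "G = gamma_obj \<kappa> \<nu> m \<Longrightarrow> \<forall>l<lam0 \<kappa>. gamma_obj \<kappa> \<nu> l \<le> gamma_obj \<kappa> \<nu> m"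
proof (cases "\<nu> = 0")
  case True
  then show ?thesis
    using that [of "lam0 \<kappa>"] assms(2) by (simp add: gamma_def gamma_obj_def)
next
  case False
  then have "0 < \<nu>"
    using assms(1) by simp
  then obtain m' where m': "m' < lam0 \<kappa>" "\<forall>l<lam0 \<kappa>. gamma_obj \<kappa> \<nu> l \<le> gamma_obj \<kappa> \<nu> m'"
    using gamma_obj_has_max by blast
  show ?thesis
  proof (rule that)
    show "gamma \<kappa> \<nu> = ereal (gamma_obj \<kappa> \<nu> m')"
      using \<open>0 < \<nu>\<close> m' by (rule gamma_eq_gamma_obj_max)
    show "gamma_obj \<kappa> \<nu> m \<le> gamma_obj \<kappa> \<nu> m'"
      using m'(2) assms(2) by simp
    show "\<forall>l<lam0 \<kappa>. gamma_obj \<kappa> \<nu> l \<le> gamma_obj \<kappa> \<nu> m"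
      if "gamma_obj \<kappa> \<nu> m' = gamma_obj \<kappa> \<nu> m"
      using m'(2) that by simp
  qed
qed

lemma gamma_obj_less_chord:
  assumes "0 \<le> x" "0 \<le> y" "x \<noteq> y" "0 < t" "t < 1" "m < lam0 \<kappa>"
  shows "ereal (gamma_obj \<kappa> (t * x + (1 - t) * y) m) < ereal t * gamma \<kappa> x + ereal (1 - t) * gamma \<kappa> y"
proof -
  obtain Gx where Gx: "gamma \<kappa> x = ereal Gx" "gamma_obj \<kappa> x m \<le> Gx"
    "Gx = gamma_obj \<kappa> x m \<Longrightarrow> \<forall>l<lam0 \<kappa>. gamma_obj \<kappa> x l \<le> gamma_obj \<kappa> x m"
    using gamma_ge_gamma_obj [OF assms(1,6)] by blast
  obtain Gy where Gy: "gamma \<kappa> y = ereal Gy" "gamma_obj \<kappa> y m \<le> Gy"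
    "Gy = gamma_obj \<kappa> y m \<Longrightarrow> \<forall>l<lam0 \<kappa>. gamma_obj \<kappa> y l \<le> gamma_obj \<kappa> y m"
    using gamma_ge_gamma_obj [OF assms(2,6)] by blast
  have "gamma_obj \<kappa> x m < Gx \<or> gamma_obj \<kappa> y m < Gy"
  proof (rule ccontr)
    assume "\<not> ?thesis"
    then have "Gx = gamma_obj \<kappa> x m" "Gy = gamma_obj \<kappa> y m"
      using Gx(2) Gy(2) by auto
    then have "x = y"
      by (rule gamma_obj_common_maximizer [OF assms(6) Gx(3) Gy(3)])
    with \<open>x \<noteq> y\<close> show False ..
  qed
  then have "t * gamma_obj \<kappa> x m < t * Gx \<or> (1 - t) * gamma_obj \<kappa> y m < (1 - t) * Gy"
    using assms(4,5) by simp
  moreover have "t * gamma_obj \<kappa> x m \<le> t * Gx" "(1 - t) * gamma_obj \<kappa> y m \<le> (1 - t) * Gy"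
    using Gx(2) Gy(2) assms(4,5) by simp_all
  moreover have "gamma_obj \<kappa> (t * x + (1 - t) * y) m = t * gamma_obj \<kappa> x m + (1 - t) * gamma_obj \<kappa> y m"
    by (simp add: gamma_obj_def algebra_simps)
  ultimately have "gamma_obj \<kappa> (t * x + (1 - t) * y) m < t * Gx + (1 - t) * Gy"
    by linarith
  with Gx(1) Gy(1) show ?thesis
    by simp
qed

end

theorem proposition2p7:
  fixes \<kappa> :: real
  assumes "8 / 3 < \<kappa>" and "\<kappa> < 8"
  shows "strict_convex_on_ereal {0..} (gamma \<kappa>)"
  unfolding strict_convex_on_ereal_def
proof (intro ballI allI impI)
  fix x y t :: real
  assume "x \<in> {0..}" "y \<in> {0..}" and "x \<noteq> y \<and> 0 < t \<and> t < 1"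
  then have xyt: "0 \<le> x" "0 \<le> y" "x \<noteq> y" "0 < t" "t < 1"
    by auto
  have "0 \<le> t * x" "0 \<le> (1 - t) * y" "0 < t * x \<or> 0 < (1 - t) * y"
    using xyt by (auto simp: zero_less_mult_iff)
  then have "0 < t * x + (1 - t) * y"
    by linarith
  then obtain m where m: "m < lam0 \<kappa>"
    "\<forall>l<lam0 \<kappa>. gamma_obj \<kappa> (t * x + (1 - t) * y) l \<le> gamma_obj \<kappa> (t * x + (1 - t) * y) m"
    using gamma_obj_has_max [OF assms] by blast
  then have "gamma \<kappa> (t * x + (1 - t) * y) = ereal (gamma_obj \<kappa> (t * x + (1 - t) * y) m)"
    using \<open>0 < t * x + (1 - t) * y\<close> by (intro gamma_eq_gamma_obj_max)
  also have "\<dots> < ereal t * gamma \<kappa> x + ereal (1 - t) * gamma \<kappa> y"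
    using gamma_obj_less_chord [OF assms xyt m(1)] .
  finally show "gamma \<kappa> (t * x + (1 - t) * y) < ereal t * gamma \<kappa> x + ereal (1 - t) * gamma \<kappa> y" .
qed

end
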